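(* Let $L$ be a simple Lie algebra over a field $K$ of characteristic $\neq 2$ such that $\mathrm{HomLie}(L)$ is closed with respect to the anticommutator $\varphi * \psi = \frac12(\varphi\circ\psi+\psi\circ\varphi)$. Then either $\mathrm{HomLie}(L) = \mathrm{Cent}(L)$, or $L$ is isomorphic to a subalgebra of the Lie algebra $\mathrm{Der}(\mathrm{HomLie}(L))$ of derivations of the Jordan algebra $(\mathrm{HomLie}(L), * )$.
   Context: A Hom-Lie structure on a Lie algebra $L$ is a linear map $\varphi: L \to L$ satisfying $[[x,y],\varphi(z)] + [[z,x],\varphi(y)] + [[y,z],\varphi(x)] = 0$ for all $x,y,z \in L$; $\mathrm{HomLie}(L)$ is the space of all of them. The centroid $\mathrm{Cent}(L)$ is the space of linear maps $\varphi: L\to L$ with $\varphi([x,y]) = [\varphi(x),y]$ for all $x,y \in L$. *)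

theory Defs
  imports Main "HOL.Vector_Spaces"
begin

locale lie_algebra = vector_space sc
  for sc :: "'k::field \<Rightarrow> 'v::ab_group_add \<Rightarrow> 'v"
  + fixes br :: "'v \<Rightarrow> 'v \<Rightarrow> 'v"
  assumes br_add_left: "br (x + y) z = br x z + br y z"
    and br_add_right: "br x (y + z) = br x y + br x z"
    and br_scale_left: "br (sc a x) y = sc a (br x y)"
    and br_scale_right: "br x (sc a y) = sc a (br x y)"
    and br_alt: "br x x = 0"
    and jacobi: "br x (br y z) + br y (br z x) + br z (br x y) = 0"

definition lie_ideal :: "('k::field \<Rightarrow> 'v::ab_group_add \<Rightarrow> 'v) \<Rightarrow> ('v \<Rightarrow> 'v \<Rightarrow> 'v) \<Rightarrow> 'v set \<Rightarrow> bool" where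
  "lie_ideal sc br I \<longleftrightarrow> module.subspace sc I \<and> (\<forall>x y. y \<in> I \<longrightarrow> br x y \<in> I)"

definition simple_lie_algebra :: "('k::field \<Rightarrow> 'v::ab_group_add \<Rightarrow> 'v) \<Rightarrow> ('v \<Rightarrow> 'v \<Rightarrow> 'v) \<Rightarrow> bool" where
  "simple_lie_algebra sc br \<longleftrightarrow> lie_algebra sc br \<and> (\<exists>x y. br x y \<noteq> 0)
     \<and> (\<forall>I. lie_ideal sc br I \<longrightarrow> I = {0} \<or> I = UNIV)"

definition HomLie :: "('k::field \<Rightarrow> 'v::ab_group_add \<Rightarrow> 'v) \<Rightarrow> ('v \<Rightarrow> 'v \<Rightarrow> 'v) \<Rightarrow> ('v \<Rightarrow> 'v) set" where
  "HomLie sc br = {\<phi>. Vector_Spaces.linear sc sc \<phi> \<and>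
     (\<forall>x y z. br (br x y) (\<phi> z) + br (br z x) (\<phi> y) + br (br y z) (\<phi> x) = 0)}"

definition Cent :: "('k::field \<Rightarrow> 'v::ab_group_add \<Rightarrow> 'v) \<Rightarrow> ('v \<Rightarrow> 'v \<Rightarrow> 'v) \<Rightarrow> ('v \<Rightarrow> 'v) set" where
  "Cent sc br = {\<phi>. Vector_Spaces.linear sc sc \<phi> \<and> (\<forall>x y. \<phi> (br x y) = br (\<phi> x) y)}"

definition endo_scale :: "('k \<Rightarrow> 'v \<Rightarrow> 'v) \<Rightarrow> 'k \<Rightarrow> ('v \<Rightarrow> 'v) \<Rightarrow> ('v \<Rightarrow> 'v)" where
  "endo_scale sc a \<phi> = (\<lambda>x. sc a (\<phi> x))"

definition endo_add :: "('v::ab_group_add \<Rightarrow> 'v) \<Rightarrow> ('v \<Rightarrow> 'v) \<Rightarrow> ('v \<Rightarrow> 'v)" where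
  "endo_add \<phi> \<psi> = (\<lambda>x. \<phi> x + \<psi> x)"

definition endo_diff :: "('v::ab_group_add \<Rightarrow> 'v) \<Rightarrow> ('v \<Rightarrow> 'v) \<Rightarrow> ('v \<Rightarrow> 'v)" where
  "endo_diff \<phi> \<psi> = (\<lambda>x. \<phi> x - \<psi> x)"

definition jordan_prod :: "('k::field \<Rightarrow> 'v::ab_group_add \<Rightarrow> 'v) \<Rightarrow> ('v \<Rightarrow> 'v) \<Rightarrow> ('v \<Rightarrow> 'v) \<Rightarrow> ('v \<Rightarrow> 'v)" where
  "jordan_prod sc \<phi> \<psi> = (\<lambda>x. sc (inverse 2) (\<phi> (\<psi> x) + \<psi> (\<phi> x)))"

text \<open>Derivations of the Jordan algebra (H, *) where H is a set of endomorphisms closed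
  under the pointwise operations and *: maps D : H \<rightarrow> H which are K-linear on H and satisfy
  D(a * b) = D a * b + a * D b.  (Values of D outside H are irrelevant.)\<close>

definition jordan_der :: "('k::field \<Rightarrow> 'v::ab_group_add \<Rightarrow> 'v) \<Rightarrow> ('v \<Rightarrow> 'v) set
     \<Rightarrow> (('v \<Rightarrow> 'v) \<Rightarrow> ('v \<Rightarrow> 'v)) set" where
  "jordan_der sc H = {D. (\<forall>\<phi>\<in>H. D \<phi> \<in> H)
     \<and> (\<forall>\<phi>\<in>H. \<forall>\<psi>\<in>H. D (endo_add \<phi> \<psi>) = endo_add (D \<phi>) (D \<psi>))
     \<and> (\<forall>a. \<forall>\<phi>\<in>H. D (endo_scale sc a \<phi>) = endo_scale sc a (D \<phi>))
     \<and> (\<forall>\<phi>\<in>H. \<forall>\<psi>\<in>H. D (jordan_prod sc \<phi> \<psi>) = endo_add (jordan_prod sc (D \<phi>) \<psi>) (jordan_prod sc \<phi> (D \<psi>)))}"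

text \<open>L embeds as a Lie subalgebra of Der(H, *) (with commutator bracket and pointwise
  linear structure): there is an injective Lie algebra homomorphism f : L \<rightarrow> Der(H,*),
  where elements of Der(H,*) are identified when they agree on H.\<close>

definition embeds_in_jordan_der :: "('k::field \<Rightarrow> 'v::ab_group_add \<Rightarrow> 'v) \<Rightarrow> ('v \<Rightarrow> 'v \<Rightarrow> 'v)
     \<Rightarrow> ('v \<Rightarrow> 'v) set \<Rightarrow> bool" where
  "embeds_in_jordan_der sc br H \<longleftrightarrow> (\<exists>f :: 'v \<Rightarrow> (('v \<Rightarrow> 'v) \<Rightarrow> ('v \<Rightarrow> 'v)).
      (\<forall>x. f x \<in> jordan_der sc H)
    \<and> (\<forall>x y. \<forall>\<phi>\<in>H. f (x + y) \<phi> = endo_add (f x \<phi>) (f y \<phi>))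
    \<and> (\<forall>a x. \<forall>\<phi>\<in>H. f (sc a x) \<phi> = endo_scale sc a (f x \<phi>))
    \<and> (\<forall>x y. \<forall>\<phi>\<in>H. f (br x y) \<phi> = endo_diff (f x (f y \<phi>)) (f y (f x \<phi>)))
    \<and> (\<forall>x y. (\<forall>\<phi>\<in>H. f x \<phi> = f y \<phi>) \<longrightarrow> x = y))"

end

theory Submission
  imports Defs
begin

text \<open>Let \<open>K\<close> be the set of \<open>z\<close> such that \<open>ad z\<close> commutes with every Hom-Lie structure.
  Commuting with \<open>ad x\<close> preserves Hom-Lie structures, and \<open>x \<mapsto> [ad x, -]\<close> is a Lie
  homomorphism; together these make \<open>K\<close> an ideal. If \<open>K = L\<close>, every Hom-Lie structure lies in
  the centroid. If \<open>K = 0\<close>, then \<open>x \<mapsto> [ad x, -]\<close> is injective, and it takes values in the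
  derivations of the Jordan algebra because the commutator with a fixed map is a derivation of
  the anticommutator.\<close>

lemma HomLie_linear: "\<phi> \<in> HomLie sc br \<Longrightarrow> Vector_Spaces.linear sc sc \<phi>"
  by (simp add: HomLie_def)

sublocale lie_algebra \<subseteq> endo: vector_space_pair sc sc ..

context lie_algebra
begin

lemma br_0_left [simp]: "br 0 x = 0"
  using br_add_left[of 0 0 x] by simp

lemma br_0_right [simp]: "br x 0 = 0"
  using br_add_right[of x 0 0] by simp

lemma br_minus_left: "br (- x) y = - br x y"
  using br_add_left[of x "- x" y] by (simp add: eq_neg_iff_add_eq_0 add.commute)

lemma br_minus_right: "br x (- y) = - br x y"
  using br_add_right[of x y "- y"] by (simp add: eq_neg_iff_add_eq_0 add.commute)

lemma br_diff_left: "br (x - y) z = br x z - br y z"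
  using br_add_left[of x "- y" z] by (simp add: br_minus_left)

lemma br_diff_right: "br x (y - z) = br x y - br x z"
  using br_add_right[of x y "- z"] by (simp add: br_minus_right)

lemma br_anticomm: "br x y = - br y x"
proof -
  have "br x y + br y x = 0"
    using br_alt[of "x + y"] br_alt[of x] br_alt[of y]
    by (simp add: br_add_left br_add_right add.assoc add.commute)
  then show ?thesis
    by (simp only: eq_neg_iff_add_eq_0)
qed

lemma br_leibniz: "br a (br u w) = br (br a u) w + br u (br a w)"
proof -
  have "br u (br w a) = - br u (br a w)"
    using br_anticomm[of w a] by (simp only: br_minus_right)
  moreover have "br w (br a u) = - br (br a u) w"
    by (rule br_anticomm)
  ultimately have "br a (br u w) - br u (br a w) - br (br a u) w = 0"
    using jacobi[of a u w] by (simp add: algebra_simps)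
  then show ?thesis
    by (simp add: algebra_simps)
qed

lemma jacobi_left: "br (br x y) z + br (br z x) y + br (br y z) x = 0"
proof -
  have "br (br x y) z + br (br z x) y + br (br y z) x
      = - (br z (br x y) + br x (br y z) + br y (br z x))"
    by (simp add: br_anticomm[of "br x y" z] br_anticomm[of "br z x" y]
        br_anticomm[of "br y z" x] algebra_simps)
  then show ?thesis
    by (simp add: jacobi)
qed

lemma br_br_left: "br (br x y) u = br x (br y u) - br y (br x u)"
  by (simp only: br_leibniz[of x y u] add_diff_cancel_right')

definition ad_commutator :: "'v \<Rightarrow> ('v \<Rightarrow> 'v) \<Rightarrow> 'v \<Rightarrow> 'v" where
  "ad_commutator x \<phi> = (\<lambda>w. br x (\<phi> w) - \<phi> (br x w))"

lemma ad_commutator_0_right [simp]: "ad_commutator x (\<lambda>_. 0) = (\<lambda>_. 0)"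
  by (simp add: ad_commutator_def)

lemma linear_ad_commutator:
  assumes "Vector_Spaces.linear sc sc \<phi>"
  shows "Vector_Spaces.linear sc sc (ad_commutator x \<phi>)"
  unfolding linear_iff ad_commutator_def
  using assms vector_space_axioms
  by (simp add: endo.linear_add endo.linear_scale br_add_right br_scale_right scale_right_diff_distrib)

lemma ad_commutator_add_left:
  assumes "Vector_Spaces.linear sc sc \<phi>"
  shows "ad_commutator (x + y) \<phi> = endo_add (ad_commutator x \<phi>) (ad_commutator y \<phi>)"
  using assms
  by (simp add: ad_commutator_def endo_add_def br_add_left endo.linear_add algebra_simps)

lemma ad_commutator_scale_left:
  assumes "Vector_Spaces.linear sc sc \<phi>"
  shows "ad_commutator (sc a x) \<phi> = endo_scale sc a (ad_commutator x \<phi>)"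
  using assms
  by (simp add: ad_commutator_def endo_scale_def br_scale_left endo.linear_scale scale_right_diff_distrib)

lemma ad_commutator_br:
  assumes "Vector_Spaces.linear sc sc \<phi>"
  shows "ad_commutator (br x y) \<phi>
    = endo_diff (ad_commutator x (ad_commutator y \<phi>)) (ad_commutator y (ad_commutator x \<phi>))"
  using assms
  by (simp add: ad_commutator_def endo_diff_def br_br_left br_diff_right endo.linear_diff algebra_simps)

lemma ad_commutator_HomLie:
  assumes "\<phi> \<in> HomLie sc br"
  shows "ad_commutator a \<phi> \<in> HomLie sc br"
proof -
  define S where "S x y z = br (br x y) (\<phi> z) + br (br z x) (\<phi> y) + br (br y z) (\<phi> x)" for x y z
  have S_0: "S x y z = 0" for x y z
    using assms by (simp add: HomLie_def S_def)
  have br_br_ad: "br (br x y) (br a q)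
      = br a (br (br x y) q) - br (br (br a x) y) q - br (br x (br a y)) q" for x y q
    using br_leibniz[of a "br x y" q] br_leibniz[of a x y] by (simp add: br_add_left algebra_simps)
  \<comment> \<open>\<open>ad a\<close> is a derivation, so the Hom-Lie expression of \<open>[ad a, \<phi>]\<close> is a combination of
    Hom-Lie expressions of \<open>\<phi>\<close>.\<close>
  have "br (br x y) (ad_commutator a \<phi> z) + br (br z x) (ad_commutator a \<phi> y)
      + br (br y z) (ad_commutator a \<phi> x)
      = br a (S x y z) - (S (br a x) y z + S x (br a y) z + S x y (br a z))" for x y z
    unfolding ad_commutator_def S_def
    by (simp add: br_diff_right br_br_ad br_add_right algebra_simps)
  with assms show ?thesis
    by (simp add: HomLie_def S_0 linear_ad_commutator)
qed

lemma ad_commutator_jordan_prod: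
  assumes "Vector_Spaces.linear sc sc \<phi>" and "Vector_Spaces.linear sc sc \<psi>"
  shows "ad_commutator x (jordan_prod sc \<phi> \<psi>)
    = endo_add (jordan_prod sc (ad_commutator x \<phi>) \<psi>) (jordan_prod sc \<phi> (ad_commutator x \<psi>))"
proof
  fix w
  have "br x (\<phi> (\<psi> w) + \<psi> (\<phi> w)) - (\<phi> (\<psi> (br x w)) + \<psi> (\<phi> (br x w)))
      = ad_commutator x \<phi> (\<psi> w) + \<psi> (ad_commutator x \<phi> w)
        + (\<phi> (ad_commutator x \<psi> w) + ad_commutator x \<psi> (\<phi> w))"
    using assms by (simp add: ad_commutator_def endo.linear_diff br_add_right algebra_simps)
  then show "ad_commutator x (jordan_prod sc \<phi> \<psi>) w
      = endo_add (jordan_prod sc (ad_commutator x \<phi>) \<psi>) (jordan_prod sc \<phi> (ad_commutator x \<psi>)) w"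
    unfolding jordan_prod_def endo_add_def ad_commutator_def
    by (simp only: br_scale_right scale_right_diff_distrib[symmetric] scale_right_distrib[symmetric])
qed

lemma ad_commutator_jordan_der:
  assumes "\<And>\<phi>. \<phi> \<in> H \<Longrightarrow> Vector_Spaces.linear sc sc \<phi>"
    and "\<And>\<phi>. \<phi> \<in> H \<Longrightarrow> ad_commutator x \<phi> \<in> H"
  shows "ad_commutator x \<in> jordan_der sc H"
  unfolding jordan_der_def
  using assms
  by (simp add: ad_commutator_jordan_prod)
    (simp add: ad_commutator_def endo_add_def endo_scale_def br_add_right br_scale_right
      scale_right_diff_distrib algebra_simps)

lemma Cent_subset_HomLie: "Cent sc br \<subseteq> HomLie sc br"
proof
  fix \<phi> assume "\<phi> \<in> Cent sc br"
  then have lin: "Vector_Spaces.linear sc sc \<phi>" and cent: "\<And>x y. \<phi> (br x y) = br (\<phi> x) y"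
    by (auto simp: Cent_def)
  have cent_right: "br u (\<phi> w) = \<phi> (br u w)" for u w
    using cent[of w u] br_anticomm[of u "\<phi> w"] br_anticomm[of u w] endo.linear_neg[OF lin] by simp
  have "br (br x y) (\<phi> z) + br (br z x) (\<phi> y) + br (br y z) (\<phi> x) = 0" for x y z
  proof -
    have "br (br x y) (\<phi> z) + br (br z x) (\<phi> y) + br (br y z) (\<phi> x)
        = \<phi> (br (br x y) z + br (br z x) y + br (br y z) x)"
      by (simp add: cent_right endo.linear_add[OF lin])
    then show ?thesis
      by (simp add: jacobi_left endo.linear_0[OF lin])
  qed
  with lin show "\<phi> \<in> HomLie sc br"
    by (simp add: HomLie_def)
qed

definition HomLie_centralizer :: "'v set" where
  "HomLie_centralizer = {z. \<forall>\<phi>\<in>HomLie sc br. ad_commutator z \<phi> = (\<lambda>_. 0)}"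

lemma lie_ideal_HomLie_centralizer: "lie_ideal sc br HomLie_centralizer"
  unfolding lie_ideal_def
proof
  show "subspace HomLie_centralizer"
    unfolding subspace_def HomLie_centralizer_def
    by (auto simp: HomLie_def ad_commutator_add_left ad_commutator_scale_left endo_add_def
        endo_scale_def) (auto simp: ad_commutator_def HomLie_def endo.linear_0)
  show "\<forall>x z. z \<in> HomLie_centralizer \<longrightarrow> br x z \<in> HomLie_centralizer"
  proof (intro allI impI)
    fix x z assume "z \<in> HomLie_centralizer"
    then have z: "ad_commutator z \<phi> = (\<lambda>_. 0)" if "\<phi> \<in> HomLie sc br" for \<phi>
      using that by (simp add: HomLie_centralizer_def)
    \<comment> \<open>\<open>[ad [x,z], \<phi>] = [ad x, [ad z, \<phi>]] - [ad z, [ad x, \<phi>]]\<close>, and \<open>[ad x, \<phi>]\<close> is again Hom-Lie.\<close>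
    have "ad_commutator (br x z) \<phi> = (\<lambda>_. 0)" if \<phi>: "\<phi> \<in> HomLie sc br" for \<phi>
    proof -
      have "ad_commutator (br x z) \<phi>
          = endo_diff (ad_commutator x (\<lambda>_. 0)) (ad_commutator z (ad_commutator x \<phi>))"
        by (simp add: ad_commutator_br HomLie_linear[OF \<phi>] z[OF \<phi>])
      also have "\<dots> = (\<lambda>_. 0)"
        by (simp add: z[OF ad_commutator_HomLie[OF \<phi>]] endo_diff_def)
      finally show ?thesis .
    qed
    then show "br x z \<in> HomLie_centralizer"
      by (simp add: HomLie_centralizer_def)
  qed
qed

lemma HomLie_eq_Cent_if_HomLie_centralizer_UNIV:
  assumes "HomLie_centralizer = UNIV"
  shows "HomLie sc br = Cent sc br"
proof (intro equalityI subsetI Cent_subset_HomLie[THEN subsetD])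
  fix \<phi> assume \<phi>: "\<phi> \<in> HomLie sc br"
  have lin: "Vector_Spaces.linear sc sc \<phi>"
    using \<phi> by (rule HomLie_linear)
  have "ad_commutator u \<phi> = (\<lambda>_. 0)" for u
    using assms \<phi> unfolding HomLie_centralizer_def by blast
  then have "br u (\<phi> w) = \<phi> (br u w)" for u w
    by (simp add: ad_commutator_def fun_eq_iff)
  then have "\<phi> (br x y) = br (\<phi> x) y" for x y
    using br_anticomm[of x y] br_anticomm[of "\<phi> x" y] endo.linear_neg[OF lin] by simp
  with lin show "\<phi> \<in> Cent sc br"
    by (simp add: Cent_def)
qed

lemma embeds_in_jordan_der_if_HomLie_centralizer_0:
  assumes "HomLie_centralizer = {0}"
  shows "embeds_in_jordan_der sc br (HomLie sc br)"
  unfolding embeds_in_jordan_der_def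
proof (intro exI[of _ ad_commutator] conjI allI ballI impI)
  fix x
  show "ad_commutator x \<in> jordan_der sc (HomLie sc br)"
    by (rule ad_commutator_jordan_der) (simp_all add: HomLie_linear ad_commutator_HomLie)
next
  fix x y
  assume "\<forall>\<phi>\<in>HomLie sc br. ad_commutator x \<phi> = ad_commutator y \<phi>"
  then have "x - y \<in> HomLie_centralizer"
    by (auto simp: HomLie_centralizer_def ad_commutator_def br_diff_left HomLie_linear
        endo.linear_diff fun_eq_iff algebra_simps)
  with assms show "x = y"
    by simp
qed (simp_all add: HomLie_linear ad_commutator_add_left ad_commutator_scale_left ad_commutator_br)

end

theorem corollary2p7:
  fixes sc :: "'k::field \<Rightarrow> 'v::ab_group_add \<Rightarrow> 'v"
    and br :: "'v \<Rightarrow> 'v \<Rightarrow> 'v"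
  assumes "simple_lie_algebra sc br"
    and "(2::'k) \<noteq> 0"
    and "\<forall>\<phi>\<in>HomLie sc br. \<forall>\<psi>\<in>HomLie sc br. jordan_prod sc \<phi> \<psi> \<in> HomLie sc br"
  shows "HomLie sc br = Cent sc br \<or> embeds_in_jordan_der sc br (HomLie sc br)"
proof -
  interpret lie_algebra sc br
    using assms(1) by (simp add: simple_lie_algebra_def)
  have "HomLie_centralizer = {0} \<or> HomLie_centralizer = UNIV"
    using assms(1) lie_ideal_HomLie_centralizer by (simp add: simple_lie_algebra_def)
  then show ?thesis
    using HomLie_eq_Cent_if_HomLie_centralizer_UNIV embeds_in_jordan_der_if_HomLie_centralizer_0
    by blast
qed

end
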